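(* Let $y_0=x_2x_0x_2^{-1}$. For every integer $n\ge1$, $x_0^n$ has one of the forms $M_0([11,11,11],[17,17,17],\dots)$, $M_0([11,11,11],[11,11,11],\dots)$, $M_{2^r-1}([26,26,26],[0,0,0],\dots)$ for some odd $r\ge1$, or $M_{2^r-1}([11,11,11],[0,0,0],\dots)$ for some even $r\ge2$; and for every $n\ge1$, $y_0^n$ has one of the forms $M_0([11,11,11],[44,219,177],\dots)$, $M_0([11,11,11],[54,193,171],\dots)$, $M_{2^r-1}([26,26,26],[0,157,106],\dots)$ for some odd $r\ge1$, or $M_{2^r-1}([11,11,11],[61,202,160],\dots)$ for some even $r\ge2$.
   Context: Consider infinite upper unitriangular block matrices $X=(X_{r,s})_{r,s\ge1}$ whose entries are $3\times3$ matrices over $\mathbb F_2$, with $X_{r,r}=I$, $X_{r,s}=0$ for $s<r$, and whose upper diagonals are $3$-periodic: for each $j\ge1$ there are $a_{j1},a_{j2},a_{j3}\in M(3,\mathbb F_2)$ with $X_{r,r+j}=a_{j,i}$, where $i\in\{1,2,3\}$, $i\equiv r\pmod 3$; $a_j=[a_{j1},a_{j2},a_{j3}]$ is the $j$-th upper diagonal. For $l\ge0$, $M_l(c_1,c_2,\dots)$ denotes such a matrix whose first $l$ upper diagonals are zero and whose $(l+1)$-st, $(l+2)$-nd, $\dots$ upper diagonals are $c_1,c_2,\dots$; diagonals hidden in "$\dots$" are unspecified, while a matrix written $M_0(c_1,\dots,c_m)$ without dots has all further diagonals zero. A matrix $u=(u_{pq})\in M(3,\mathbb F_2)$ is encoded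 by the integer $256u_{11}+128u_{12}+64u_{13}+32u_{21}+16u_{22}+8u_{23}+4u_{31}+2u_{32}+u_{33}$, and a diagonal by the triple of integers of its three blocks. The elements are $x_0=M_0([11,11,11],[17,17,17],[26,26,26],[11,11,0],[17,0,0])$, $x_2=M_0([46,68,217],[12,194,363],[26,326,77],[46,68,0],[12,0,0])$. *)

theory Defs
  imports "HOL-Analysis.Analysis" "HOL-Library.Z2"
begin

type_synonym blk = "bit ^ 3 ^ 3"

text \<open>Integer encoding of a block: entry u_pq is the bit of weight 2^(8 - (3(p-1)+(q-1))).
  Row/column p of the paper corresponds to the index with Rep_bit1 = p - 1.\<close>
definition enc :: "nat \<Rightarrow> blk" where
  "enc n = (\<chi> p q. if odd (n div 2 ^ (8 - (3 * nat (Rep_bit1 p) + nat (Rep_bit1 q)))) then 1 else 0)"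

text \<open>Infinite block matrices. X r s is the block X_{r+1,s+1} of the paper (0-based indexing).\<close>
type_synonym imat = "nat \<Rightarrow> nat \<Rightarrow> blk"

definition periodic_ut :: "imat \<Rightarrow> bool" where
  "periodic_ut X \<longleftrightarrow> (\<forall>r. X r r = mat 1) \<and> (\<forall>r s. s < r \<longrightarrow> X r s = 0)
     \<and> (\<forall>r s. X (r + 3) (s + 3) = X r s)"

definition mident :: imat where
  "mident r s = (if r = s then mat 1 else 0)"

definition mmul :: "imat \<Rightarrow> imat \<Rightarrow> imat" where
  "mmul X Y r s = (\<Sum>t\<in>{r..s}. X r t ** Y t s)"

primrec mpow :: "imat \<Rightarrow> nat \<Rightarrow> imat" where
  "mpow X 0 = mident"
| "mpow X (Suc n) = mmul (mpow X n) X"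

definition minv :: "imat \<Rightarrow> imat" where
  "minv X = (THE Y. periodic_ut Y \<and> mmul X Y = mident)"

text \<open>The j-th upper diagonal [a_{j1},a_{j2},a_{j3}]; a_{ji} = X_{i,i+j} (paper indexing).\<close>
definition diag :: "imat \<Rightarrow> nat \<Rightarrow> blk \<times> blk \<times> blk" where
  "diag X j = (X 0 j, X 1 (1 + j), X 2 (2 + j))"

definition encd :: "nat \<Rightarrow> nat \<Rightarrow> nat \<Rightarrow> blk \<times> blk \<times> blk" where
  "encd a b c = (enc a, enc b, enc c)"

text \<open>has_form l cs X: X = M_l(c_1,...,c_m,...) (further diagonals unspecified).\<close>
definition has_form :: "nat \<Rightarrow> (blk \<times> blk \<times> blk) list \<Rightarrow> imat \<Rightarrow> bool" where
  "has_form l cs X \<longleftrightarrow> periodic_ut X \<and> (\<forall>j. 1 \<le> j \<and> j \<le> l \<longrightarrow> diag X j = (0, 0, 0))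
     \<and> (\<forall>k < length cs. diag X (l + 1 + k) = cs ! k)"

text \<open>M_0(c_1,...,c_m) without dots: all further diagonals zero.\<close>
definition exact_M0 :: "(blk \<times> blk \<times> blk) list \<Rightarrow> imat" where
  "exact_M0 cs = (\<lambda>r s. if s < r then 0 else if s = r then mat 1
      else if s - r \<le> length cs then
        (let d = cs ! (s - r - 1) in if r mod 3 = 0 then fst d else if r mod 3 = 1 then fst (snd d) else snd (snd d))
      else 0)"

definition x0 :: imat where
  "x0 = exact_M0 [encd 11 11 11, encd 17 17 17, encd 26 26 26, encd 11 11 0, encd 17 0 0]"

definition x2 :: imat where
  "x2 = exact_M0 [encd 46 68 217, encd 12 194 363, encd 26 326 77, encd 46 68 0, encd 12 0 0]"

definition y0 :: imat where
  "y0 = mmul (mmul x2 x0) (minv x2)"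

end

theory Submission
  imports Defs
begin

(* Over F_2, (I + N)^2 = I + N^2 for every unitriangular I + N.  So if the first L - 1 upper
   diagonals of X vanish, the L-th carries a constant block A and the next one a block B
   commuting with A, then X^2 has the same shape with 2L, A^2 and 0 in place of L, A and B.
   As the blocks encoded by 11 and 26 square to each other, this determines the two leading
   diagonals of x0^(2^r); for L >= 2 and B = 0 the odd powers of X have the same two leading
   diagonals as X.  Since x0^4 is trivial on the first two diagonals, an odd power of x0 agrees
   there with x0 or with x0^3.
   Conjugation by x2 = I + P + ..., whose inverse is I + P + ... as well, keeps the leading
   diagonal A and adds P_i A + A P_(i+L) to the next one, which depends on L = 2^r only through
   2^r mod 3. *)

section \<open>Blocks\<close>

lemma forall_3_zero_based: "(\<forall>i::3. P i) \<longleftrightarrow> P 0 \<and> P 1 \<and> P 2"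
proof -
  have "(3::3) = 0" by simp
  then have "(\<forall>i::3. P i) \<longleftrightarrow> P 1 \<and> P 2 \<and> P 0" using forall_3[of P] by (simp only:)
  then show ?thesis by blast
qed

lemma sum_3_zero_based: "(\<Sum>i\<in>(UNIV::3 set). f i) = f 0 + f 1 + f 2"
proof -
  have "(3::3) = 0" by simp
  then have "(\<Sum>i\<in>(UNIV::3 set). f i) = f 1 + f 2 + f 0" using sum_3[of f] by (simp only:)
  then show ?thesis by (simp add: ac_simps)
qed

lemmas enc_eval_simps = vec_eq_iff forall_3_zero_based sum_3_zero_based
  matrix_matrix_mult_def mat_def enc_def bit1.Rep_0 bit1.Rep_1 bit1.Rep_numeral

lemma matrix_add_rdistrib: "((A::'a::semiring_1^'n^'m) + B) ** C = A ** C + B ** C"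
  by (vector matrix_matrix_mult_def sum.distrib[symmetric] distrib_right)

lemma matrix_sum_mult: "finite S \<Longrightarrow> (\<Sum>t\<in>S. f t) ** (C::'a::semiring_1^'p^'n) = (\<Sum>t\<in>S. f t ** C)"
  by (induction S rule: finite_induct) (auto simp: matrix_add_rdistrib)

lemma matrix_mult_sum: "finite S \<Longrightarrow> (C::'a::semiring_1^'n^'m) ** (\<Sum>t\<in>S. f t) = (\<Sum>t\<in>S. C ** f t)"
  by (induction S rule: finite_induct) (auto simp: matrix_add_ldistrib)

lemma bit_matrix_add_self: "(A::bit^'n^'m) + A = 0"
proof -
  have "(x::bit) + x = 0" for x by (cases x) simp_all
  then show ?thesis by (simp add: vec_eq_iff)
qed

lemma bit_matrix_add_cancel_left: "(A::bit^'n^'m) + (A + B) = B"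
  by (simp add: add.assoc[symmetric] bit_matrix_add_self)

lemma bit_matrix_uminus: "- (A::bit^'n^'m) = A"
  by (simp add: vec_eq_iff)

lemma enc_0: "enc 0 = 0"
  by (simp add: enc_eval_simps)

lemma enc_11_square: "enc 11 ** enc 11 = enc 26"
  by (simp add: enc_eval_simps)

lemma enc_26_square: "enc 26 ** enc 26 = enc 11"
  by (simp add: enc_eval_simps)

lemma enc_11_17_commute: "enc 11 ** enc 17 = enc 17 ** enc 11"
  by (simp add: enc_eval_simps)

lemma enc_26_add_17: "enc 26 + enc 17 = enc 11"
  by (simp add: enc_eval_simps)

section \<open>Infinite block matrices\<close>

definition madd :: "imat \<Rightarrow> imat \<Rightarrow> imat" where
  "madd X Y = (\<lambda>r s. X r s + Y r s)"

definition vanishes_below :: "nat \<Rightarrow> imat \<Rightarrow> bool" where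
  "vanishes_below a X \<longleftrightarrow> (\<forall>r s. s < r + a \<longrightarrow> X r s = 0)"

abbreviation upper_triangular :: "imat \<Rightarrow> bool" where
  "upper_triangular \<equiv> vanishes_below 0"

definition agree_upto :: "nat \<Rightarrow> imat \<Rightarrow> imat \<Rightarrow> bool" where
  "agree_upto K X Y \<longleftrightarrow> (\<forall>r s. s \<le> r + K \<longrightarrow> X r s = Y r s)"

definition band :: "nat \<Rightarrow> (nat \<Rightarrow> blk) \<Rightarrow> imat" where
  "band a f = (\<lambda>r s. if s = r + a then f r else 0)"

lemma sum_eq_single:
  assumes "finite S" "c \<in> S" "\<And>t. t \<in> S \<Longrightarrow> t \<noteq> c \<Longrightarrow> f t = 0"
  shows "sum f S = f c"
  using assms sum.mono_neutral_right[of S "{c}" f] by auto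

lemma mmul_assoc: "mmul (mmul X Y) Z = mmul X (mmul Y Z)"
proof (intro ext)
  fix r s
  have "mmul (mmul X Y) Z r s = (\<Sum>t\<in>{r..s}. \<Sum>u\<in>{u\<in>{r..s}. u \<le> t}. X r u ** Y u t ** Z t s)"
    by (auto simp: mmul_def matrix_sum_mult intro!: sum.cong)
  also have "\<dots> = (\<Sum>u\<in>{r..s}. \<Sum>t\<in>{t\<in>{r..s}. u \<le> t}. X r u ** Y u t ** Z t s)"
    by (rule sum.swap_restrict) auto
  also have "\<dots> = mmul X (mmul Y Z) r s"
    by (auto simp: mmul_def matrix_mult_sum matrix_mul_assoc intro!: sum.cong)
  finally show "mmul (mmul X Y) Z r s = mmul X (mmul Y Z) r s" .
qed

lemma mmul_madd_left: "mmul (madd X Y) Z = madd (mmul X Z) (mmul Y Z)"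
  by (simp add: mmul_def madd_def fun_eq_iff matrix_add_rdistrib sum.distrib)

lemma mmul_madd_right: "mmul Z (madd X Y) = madd (mmul Z X) (mmul Z Y)"
  by (simp add: mmul_def madd_def fun_eq_iff matrix_add_ldistrib sum.distrib)

lemma upper_triangular_mmul: "upper_triangular (mmul X Y)"
  by (simp add: vanishes_below_def mmul_def)

lemma upper_triangular_mident: "upper_triangular mident"
  by (simp add: vanishes_below_def mident_def)

lemma upper_triangular_mpow: "upper_triangular (mpow X n)"
  by (cases n) (simp_all add: upper_triangular_mident upper_triangular_mmul)

lemma mmul_mident_left:
  assumes "upper_triangular X"
  shows "mmul mident X = X"
proof (intro ext)
  fix r s
  show "mmul mident X r s = X r s"
  proof (cases "r \<le> s")
    case True
    then show ?thesis
      unfolding mmul_def by (subst sum_eq_single[where c = r]) (auto simp: mident_def)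
  qed (use assms in \<open>simp add: mmul_def vanishes_below_def\<close>)
qed

lemma mmul_mident_right:
  assumes "upper_triangular X"
  shows "mmul X mident = X"
proof (intro ext)
  fix r s
  show "mmul X mident r s = X r s"
  proof (cases "r \<le> s")
    case True
    then show ?thesis
      unfolding mmul_def by (subst sum_eq_single[where c = s]) (auto simp: mident_def)
  qed (use assms in \<open>simp add: mmul_def vanishes_below_def\<close>)
qed

lemma mident_eq_band: "mident = band 0 (\<lambda>_. mat 1)"
  by (simp add: mident_def band_def fun_eq_iff)

lemma mmul_band: "mmul (band a f) (band b g) = band (a + b) (\<lambda>r. f r ** g (r + a))"
proof (intro ext)
  fix r s
  show "mmul (band a f) (band b g) r s = band (a + b) (\<lambda>r. f r ** g (r + a)) r s"
  proof (cases "s = r + a + b")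
    case True
    then show ?thesis
      unfolding mmul_def by (subst sum_eq_single[where c = "r + a"]) (auto simp: band_def)
  qed (auto simp: mmul_def band_def intro!: sum.neutral)
qed

lemma mpow_add: "mpow X (m + n) = mmul (mpow X m) (mpow X n)"
  by (induction n) (simp_all add: mmul_mident_right upper_triangular_mpow mmul_assoc)

lemma mpow_mult: "mpow X (m * n) = mpow (mpow X m) n"
proof (induction n)
  case (Suc n)
  have "mpow X (m * Suc n) = mpow X (m * n + m)" by (simp add: add.commute)
  then show ?case using Suc by (simp add: mpow_add)
qed simp

lemma mpow_one: "upper_triangular X \<Longrightarrow> mpow X 1 = X"
  by (simp add: mmul_mident_left)

lemma mpow_two: "upper_triangular X \<Longrightarrow> mpow X 2 = mmul X X"
  by (simp add: numeral_2_eq_2 mmul_mident_left)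

lemma vanishes_below_mmul:
  "vanishes_below a X \<Longrightarrow> vanishes_below b Y \<Longrightarrow> vanishes_below (a + b) (mmul X Y)"
  unfolding vanishes_below_def mmul_def
proof (intro allI impI sum.neutral ballI)
  fix r s t
  assume "\<forall>r s. s < r + a \<longrightarrow> X r s = 0" "\<forall>r s. s < r + b \<longrightarrow> Y r s = 0" "s < r + (a + b)"
  then show "X r t ** Y t s = 0" by (cases "t < r + a") auto
qed

lemma vanishes_below_mono: "vanishes_below b X \<Longrightarrow> a \<le> b \<Longrightarrow> vanishes_below a X"
  by (simp add: vanishes_below_def)

lemma agree_upto_refl: "agree_upto K X X"
  by (simp add: agree_upto_def)

lemma agree_upto_trans [trans]: "agree_upto K X Y \<Longrightarrow> agree_upto K Y Z \<Longrightarrow> agree_upto K X Z"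
  by (simp add: agree_upto_def)

lemma agree_upto_mono: "agree_upto K X Y \<Longrightarrow> K' \<le> K \<Longrightarrow> agree_upto K' X Y"
  by (auto simp: agree_upto_def)

text \<open>An entry of \<open>X Y\<close> on a diagonal \<open>\<le> K\<close> only involves diagonals \<open>\<le> K - b\<close>
  of \<open>X\<close> and \<open>\<le> K - a\<close> of \<open>Y\<close>.\<close>
lemma agree_upto_mmul:
  assumes "agree_upto p X X'" "agree_upto q Y Y'"
    and "vanishes_below a X" "vanishes_below a X'" "vanishes_below b Y" "vanishes_below b Y'"
    and "K \<le> p + b" "K \<le> q + a"
  shows "agree_upto K (mmul X Y) (mmul X' Y')"
  unfolding agree_upto_def mmul_def
proof (intro allI impI sum.cong refl)
  fix r s t assume s: "s \<le> r + K" and t: "t \<in> {r..s}"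
  show "X r t ** Y t s = X' r t ** Y' t s"
  proof (cases "t < r + a \<or> s < t + b")
    case True then show ?thesis using assms(3-6) by (auto simp: vanishes_below_def)
  next
    case False
    then have "t \<le> r + p" "s \<le> t + q" using s assms(7,8) by auto
    then show ?thesis using assms(1,2) by (simp add: agree_upto_def)
  qed
qed

lemma agree_upto_mpow_mident:
  assumes "agree_upto K Y mident" "upper_triangular Y"
  shows "agree_upto K (mpow Y k) mident"
proof (induction k)
  case (Suc k)
  have "agree_upto K (mmul (mpow Y k) Y) (mmul mident mident)"
    by (rule agree_upto_mmul[where a = 0 and b = 0])
      (use Suc assms in \<open>auto simp: upper_triangular_mpow upper_triangular_mident\<close>)
  then show ?case by (simp add: mmul_mident_left upper_triangular_mident)
qed (simp add: agree_upto_refl)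

lemma agree_upto_mpow_add_mult:
  assumes "agree_upto K (mpow X m) mident"
  shows "agree_upto K (mpow X (c + m * k)) (mpow X c)"
proof -
  have "agree_upto K (mmul (mpow X c) (mpow (mpow X m) k)) (mmul (mpow X c) mident)"
    by (rule agree_upto_mmul[where a = 0 and b = 0])
      (auto simp: agree_upto_refl agree_upto_mpow_mident assms upper_triangular_mpow
        upper_triangular_mident)
  then show ?thesis by (simp add: mpow_add mpow_mult mmul_mident_right upper_triangular_mpow)
qed

lemma periodic_ut_shift:
  assumes "periodic_ut X"
  shows "X (r + 3 * k) (s + 3 * k) = X r s"
proof (induction k)
  case (Suc k)
  have "X (r + 3 * Suc k) (s + 3 * Suc k) = X (r + 3 * k + 3) (s + 3 * k + 3)"
    by (simp add: algebra_simps)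
  also have "\<dots> = X r s" using assms Suc by (simp add: periodic_ut_def)
  finally show ?case .
qed simp

lemma periodic_ut_mod: "periodic_ut X \<Longrightarrow> X (r + L) (s + L) = X (r + L mod 3) (s + L mod 3)"
  using periodic_ut_shift[of X "r + L mod 3" "L div 3" "s + L mod 3"]
  by (simp add: add.assoc)

lemma periodic_ut_mmul:
  assumes "periodic_ut X" "periodic_ut Y"
  shows "periodic_ut (mmul X Y)"
  unfolding periodic_ut_def
proof (intro conjI allI impI)
  fix r show "mmul X Y r r = mat 1" using assms by (simp add: mmul_def periodic_ut_def)
next
  fix r s :: nat assume "s < r" then show "mmul X Y r s = 0" by (simp add: mmul_def)
next
  fix r s
  have "mmul X Y (r + 3) (s + 3) = (\<Sum>t\<in>{r..s}. X (r + 3) (t + 3) ** Y (t + 3) (s + 3))"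
    unfolding mmul_def by (rule sum.shift_bounds_cl_nat_ivl)
  also have "\<dots> = mmul X Y r s"
    using assms by (simp add: mmul_def periodic_ut_def)
  finally show "mmul X Y (r + 3) (s + 3) = mmul X Y r s" .
qed

lemma periodic_ut_mident: "periodic_ut mident"
  by (simp add: periodic_ut_def mident_def)

lemma periodic_ut_mpow: "periodic_ut X \<Longrightarrow> periodic_ut (mpow X n)"
  by (induction n) (simp_all add: periodic_ut_mident periodic_ut_mmul)

lemma periodic_ut_exact_M0: "periodic_ut (exact_M0 cs)"
  unfolding periodic_ut_def
proof (intro conjI allI impI)
  fix r s :: nat
  have "(s + 3 < r + 3) = (s < r)" "(s + 3 = r + 3) = (s = r)" "(s + 3) - (r + 3) = s - r"
    "(r + 3) mod 3 = r mod 3"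
    by simp_all
  then show "exact_M0 cs (r + 3) (s + 3) = exact_M0 cs r s" by (simp only: exact_M0_def)
qed (simp_all add: exact_M0_def)

section \<open>Leading diagonals\<close>

definition leading_form :: "nat \<Rightarrow> (nat \<Rightarrow> blk) \<Rightarrow> (nat \<Rightarrow> blk) \<Rightarrow> imat" where
  "leading_form L A B = madd mident (madd (band L A) (band (Suc L) B))"

text \<open>For \<open>L \<ge> 1\<close>, \<open>has_leading L A B X\<close> says that \<open>X\<close> has the shape
  \<open>M\<^sub>L\<^sub>-\<^sub>1(A, B, \<dots>)\<close>, the blocks of the two leading diagonals being given as functions
  of the row index.\<close>
definition has_leading :: "nat \<Rightarrow> (nat \<Rightarrow> blk) \<Rightarrow> (nat \<Rightarrow> blk) \<Rightarrow> imat \<Rightarrow> bool" where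
  "has_leading L A B X \<longleftrightarrow> upper_triangular X \<and> agree_upto (Suc L) X (leading_form L A B)"

lemma has_leading_agree_mident:
  assumes "has_leading L A B X" "K < L"
  shows "agree_upto K X mident"
proof -
  have "agree_upto K X (leading_form L A B)"
    using assms by (auto simp: has_leading_def intro: agree_upto_mono)
  moreover have "agree_upto K (leading_form L A B) mident"
    using assms(2) by (auto simp: agree_upto_def leading_form_def madd_def band_def)
  ultimately show ?thesis by (rule agree_upto_trans)
qed

lemma has_leading_agree:
  "has_leading L A B X \<Longrightarrow> agree_upto (Suc L) Y X \<Longrightarrow> upper_triangular Y \<Longrightarrow> has_leading L A B Y"
  unfolding has_leading_def by (blast intro: agree_upto_trans)

lemma has_leading_decomp:
  assumes "has_leading L A B X"
  obtains N where "X = madd mident N" "vanishes_below L N"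
    "agree_upto (Suc L) N (madd (band L A) (band (Suc L) B))"
proof
  define N where "N = (\<lambda>r s. X r s - mident r s)"
  show "X = madd mident N" by (simp add: N_def madd_def)
  show "vanishes_below L N"
    using assms
    by (force simp: vanishes_below_def has_leading_def agree_upto_def N_def leading_form_def
        madd_def band_def mident_def)
  show "agree_upto (Suc L) N (madd (band L A) (band (Suc L) B))"
    using assms by (auto simp: has_leading_def agree_upto_def N_def leading_form_def madd_def)
qed

text \<open>In characteristic 2, \<open>(I + N)\<^sup>2 = I + N\<^sup>2\<close>.\<close>
lemma has_leading_square:
  assumes X: "has_leading L (\<lambda>_. A) (\<lambda>_. B) X" and "A ** B = B ** A"
  shows "has_leading (2 * L) (\<lambda>_. A ** A) (\<lambda>_. 0) (mmul X X)"
proof -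
  define T where "T = madd (band L (\<lambda>_. A)) (band (Suc L) (\<lambda>_. B))"
  obtain N where XN: "X = madd mident N" and N: "vanishes_below L N"
    and NT: "agree_upto (Suc L) N T"
    using has_leading_decomp[OF X] unfolding T_def by blast
  have T: "vanishes_below L T" by (auto simp: vanishes_below_def T_def madd_def band_def)
  have NN: "agree_upto (2 * L + 1) (mmul N N) (mmul T T)"
    by (rule agree_upto_mmul[OF NT NT N T N T]) auto
  have "upper_triangular N" using vanishes_below_mono[OF N] by simp
  then have "mmul X X = madd (madd mident N) (madd N (mmul N N))"
    by (simp add: XN mmul_madd_left mmul_madd_right mmul_mident_left mmul_mident_right
        upper_triangular_mident)
  also have "\<dots> = madd mident (mmul N N)"
    by (simp add: madd_def fun_eq_iff add.assoc bit_matrix_add_cancel_left)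
  finally have XX: "mmul X X = madd mident (mmul N N)" .
  have TT: "mmul T T = madd (madd (band (2 * L) (\<lambda>_. A ** A)) (band (2 * L + 1) (\<lambda>_. B ** A)))
      (madd (band (2 * L + 1) (\<lambda>_. A ** B)) (band (2 * L + 2) (\<lambda>_. B ** B)))"
    by (simp add: T_def mmul_madd_left mmul_madd_right mmul_band mult_2 add.commute
        add.left_commute)
  have "B ** A + A ** B = 0" using assms(2) by (simp add: bit_matrix_add_self)
  then have "agree_upto (Suc (2 * L)) (mmul X X) (leading_form (2 * L) (\<lambda>_. A ** A) (\<lambda>_. 0))"
    using NN by (auto simp: agree_upto_def XX TT leading_form_def madd_def band_def)
  then show ?thesis by (simp add: has_leading_def upper_triangular_mmul)
qed

lemma has_leading_odd_power:
  assumes "2 \<le> L" and X: "has_leading L (\<lambda>_. A) (\<lambda>_. 0) X"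
  shows "has_leading L (\<lambda>_. A) (\<lambda>_. 0) (mpow X (1 + 2 * k))"
proof -
  have X2: "has_leading (2 * L) (\<lambda>_. A ** A) (\<lambda>_. 0) (mpow X 2)"
    using has_leading_square[OF X] X by (simp add: mpow_two has_leading_def)
  have "agree_upto (Suc L) (mpow X 2) mident"
    using has_leading_agree_mident[OF X2] assms(1) by simp
  then have "agree_upto (Suc L) (mpow X (1 + 2 * k)) (mpow X 1)"
    by (rule agree_upto_mpow_add_mult)
  then have "agree_upto (Suc L) (mpow X (1 + 2 * k)) X"
    using X by (simp only: has_leading_def mpow_one)
  then show ?thesis by (rule has_leading_agree[OF X _ upper_triangular_mpow])
qed

lemma has_form_of_has_leading:
  assumes "periodic_ut X" "1 \<le> L" "has_leading L A B X"
  shows "has_form (L - 1) [(A 0, A 1, A 2), (B 0, B 1, B 2)] X"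
proof -
  have X: "X i (i + j) = leading_form L A B i (i + j)" if "j \<le> Suc L" for i j
    using assms(3) that by (simp add: has_leading_def agree_upto_def)
  have "diag X j = (0, 0, 0)" if "1 \<le> j" "j < L" for j
    using X[of j 0] X[of j 1] X[of j 2] that
    by (simp add: diag_def leading_form_def madd_def band_def mident_def)
  moreover have "diag X L = (A 0, A 1, A 2)" "diag X (Suc L) = (B 0, B 1, B 2)"
    using X[of L 0] X[of L 1] X[of L 2] X[of "Suc L" 0] X[of "Suc L" 1] X[of "Suc L" 2] assms(2)
    by (simp_all add: diag_def leading_form_def madd_def band_def mident_def)
  ultimately show ?thesis
    using assms(1,2) by (auto simp: has_form_def less_Suc_eq)
qed

section \<open>Inverses of unitriangular matrices\<close>

definition unitriangular :: "imat \<Rightarrow> bool" where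
  "unitriangular X \<longleftrightarrow> upper_triangular X \<and> (\<forall>r. X r r = mat 1)"

lemma periodic_ut_imp_unitriangular: "periodic_ut X \<Longrightarrow> unitriangular X"
  by (simp add: periodic_ut_def unitriangular_def vanishes_below_def)

function unitri_inv :: "imat \<Rightarrow> imat" where
  "unitri_inv X r s = (if s < r then 0 else if s = r then mat 1
     else - (\<Sum>t\<in>{Suc r..s}. X r t ** unitri_inv X t s))"
  by auto
termination by (relation "Wellfounded.measure (\<lambda>(X, r, s). s - r)") auto

declare unitri_inv.simps [simp del]

lemma unitri_inv_diag: "unitri_inv X r r = mat 1"
  by (simp add: unitri_inv.simps)

lemma unitriangular_unitri_inv: "unitriangular (unitri_inv X)"
  by (simp add: unitriangular_def vanishes_below_def unitri_inv.simps)

lemma unitri_inv_Suc: "unitri_inv X r (Suc r) = - X r (Suc r)"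
  by (simp add: unitri_inv.simps[of X r "Suc r"] unitri_inv_diag)

lemma mmul_unitri_inv:
  assumes "unitriangular X"
  shows "mmul X (unitri_inv X) = mident"
proof (intro ext)
  fix r s
  show "mmul X (unitri_inv X) r s = mident r s"
  proof (cases "r < s")
    case True
    then have "mmul X (unitri_inv X) r s
        = unitri_inv X r s + (\<Sum>t\<in>{Suc r..s}. X r t ** unitri_inv X t s)"
      using assms unfolding mmul_def unitriangular_def by (subst sum.atLeast_Suc_atMost) auto
    then show ?thesis using True unitri_inv.simps[of X r s] by (simp add: mident_def)
  qed (use assms in \<open>auto simp: mmul_def mident_def unitri_inv_diag unitriangular_def\<close>)
qed

lemma unitri_inv_unique:
  assumes X: "unitriangular X" and Y: "upper_triangular Y" and XY: "mmul X Y = mident"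
  shows "Y = unitri_inv X"
proof -
  have "Y r s = unitri_inv X r s" for r s
  proof (induction "s - r" arbitrary: r rule: less_induct)
    case less
    show ?case
    proof (cases "r < s")
      case True
      have IH: "Y t s = unitri_inv X t s" if "t \<in> {Suc r..s}" for t
        using less that True by auto
      have "0 = mmul X Y r s" using XY True by (simp add: mident_def)
      also have "\<dots> = Y r s + (\<Sum>t\<in>{Suc r..s}. X r t ** Y t s)"
        using True X unfolding mmul_def unitriangular_def by (subst sum.atLeast_Suc_atMost) auto
      also have "(\<Sum>t\<in>{Suc r..s}. X r t ** Y t s) = (\<Sum>t\<in>{Suc r..s}. X r t ** unitri_inv X t s)"
        by (rule sum.cong) (simp_all add: IH)
      finally have "Y r s + (\<Sum>t\<in>{Suc r..s}. X r t ** unitri_inv X t s) = 0" by (rule sym)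
      then show ?thesis
        using True unitri_inv.simps[of X r s] by (simp add: add_eq_0_iff2)
    next
      case False
      have "mmul X Y r r = mat 1" using XY by (simp add: mident_def)
      then show ?thesis
        using False X Y
        by (cases "r = s")
          (auto simp: mmul_def unitriangular_def vanishes_below_def unitri_inv.simps)
    qed
  qed
  then show ?thesis by blast
qed

lemma mmul_unitri_inv_left:
  assumes "unitriangular X"
  shows "mmul (unitri_inv X) X = mident"
proof -
  let ?Z = "unitri_inv X"
  have ZZ': "mmul ?Z (unitri_inv ?Z) = mident"
    by (simp add: mmul_unitri_inv unitriangular_unitri_inv)
  have "X = mmul (mmul X ?Z) (unitri_inv ?Z)"
    using assms by (simp add: mmul_assoc ZZ' mmul_mident_right unitriangular_def)
  also have "\<dots> = unitri_inv ?Z"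
    using assms unitriangular_unitri_inv[of ?Z]
    by (simp add: mmul_unitri_inv mmul_mident_left unitriangular_def)
  finally show ?thesis using ZZ' by simp
qed

lemma periodic_ut_unitri_inv:
  assumes X: "periodic_ut X"
  shows "periodic_ut (unitri_inv X)"
proof -
  have uX: "unitriangular X" using X by (rule periodic_ut_imp_unitriangular)
  define Y where "Y r s = unitri_inv X (r + 3) (s + 3)" for r s
  have "mmul X Y r s = mident r s" for r s
  proof -
    have "mmul X Y r s = (\<Sum>t\<in>{r..s}. X (r + 3) (t + 3) ** unitri_inv X (t + 3) (s + 3))"
      using X by (simp add: mmul_def Y_def periodic_ut_def)
    also have "\<dots> = mmul X (unitri_inv X) (r + 3) (s + 3)"
      unfolding mmul_def by (rule sum.shift_bounds_cl_nat_ivl[symmetric])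
    finally show ?thesis by (simp add: mmul_unitri_inv[OF uX] mident_def)
  qed
  then have "Y = unitri_inv X"
    using unitriangular_unitri_inv[of X]
    by (intro unitri_inv_unique[OF uX]) (auto simp: Y_def unitriangular_def vanishes_below_def)
  then have "unitri_inv X (r + 3) (s + 3) = unitri_inv X r s" for r s
    by (metis Y_def)
  then show ?thesis
    using unitriangular_unitri_inv[of X]
    by (simp add: periodic_ut_def unitriangular_def vanishes_below_def)
qed

lemma minv_eq_unitri_inv:
  assumes "periodic_ut X"
  shows "minv X = unitri_inv X"
  unfolding minv_def
proof (rule the_equality)
  have X: "unitriangular X" using assms by (rule periodic_ut_imp_unitriangular)
  then show "periodic_ut (unitri_inv X) \<and> mmul X (unitri_inv X) = mident"
    using assms by (simp add: periodic_ut_unitri_inv mmul_unitri_inv)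
  fix Y assume "periodic_ut Y \<and> mmul X Y = mident"
  then show "Y = unitri_inv X"
    by (intro unitri_inv_unique[OF X])
      (auto dest: periodic_ut_imp_unitriangular simp: unitriangular_def)
qed

section \<open>Conjugation\<close>

lemma mpow_conjugate:
  assumes "mmul W V = mident" "mmul V W = mident" "upper_triangular W"
  shows "mpow (mmul (mmul W X) V) n = mmul (mmul W (mpow X n)) V"
proof (induction n)
  case 0
  show ?case using assms by (simp add: mmul_mident_right)
next
  case (Suc n)
  have "mpow (mmul (mmul W X) V) (Suc n) = mmul (mmul (mmul W (mpow X n)) V) (mmul (mmul W X) V)"
    by (simp only: mpow.simps Suc)
  also have "\<dots> = mmul W (mmul (mpow X n) (mmul (mmul V W) (mmul X V)))"
    by (simp only: mmul_assoc)
  also have "\<dots> = mmul (mmul W (mpow X (Suc n))) V"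
    by (simp add: assms(2) mmul_mident_left upper_triangular_mmul mmul_assoc)
  finally show ?case .
qed

lemma agree_upto_one_unitriangular:
  "unitriangular W \<Longrightarrow> agree_upto 1 W (madd mident (band 1 (\<lambda>r. W r (Suc r))))"
  by (auto simp: unitriangular_def agree_upto_def vanishes_below_def madd_def band_def mident_def
      le_Suc_eq)

text \<open>Conjugating \<open>M = I + N\<close> by \<open>W = I + P + \<dots>\<close> with inverse \<open>V = I + Q + \<dots>\<close> gives
  \<open>I + W N V\<close>, which up to the diagonal after the leading one of \<open>N\<close> is \<open>I + N + P N + N Q\<close>.\<close>
lemma has_leading_conjugate:
  assumes W: "unitriangular W" and V: "unitriangular V" and WV: "mmul W V = mident"
    and "1 \<le> L" and M: "has_leading L A B M"
  shows "has_leading L A (\<lambda>r. B r + W r (Suc r) ** A (Suc r) + A r ** V (r + L) (Suc (r + L)))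
           (mmul (mmul W M) V)"
proof -
  define T where "T = madd (band L A) (band (Suc L) B)"
  define W1 where "W1 = madd mident (band 1 (\<lambda>r. W r (Suc r)))"
  define V1 where "V1 = madd mident (band 1 (\<lambda>r. V r (Suc r)))"
  obtain N where MN: "M = madd mident N" and N: "vanishes_below L N"
    and NT: "agree_upto (Suc L) N T"
    using has_leading_decomp[OF M] unfolding T_def by blast
  have T: "vanishes_below L T" by (auto simp: vanishes_below_def T_def madd_def band_def)
  have uW: "upper_triangular W" and uV: "upper_triangular V"
    using W V by (simp_all add: unitriangular_def)
  have W1: "upper_triangular W1" and V1: "upper_triangular V1"
    by (auto simp: vanishes_below_def W1_def V1_def madd_def band_def mident_def)
  have "agree_upto (Suc L) (mmul W N) (mmul W1 T)"
    by (rule agree_upto_mmul[OF agree_upto_one_unitriangular[OF W, folded W1_def] NT uW W1 N T])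
      simp_all
  then have "agree_upto (Suc L) (mmul (mmul W N) V) (mmul (mmul W1 T) V1)"
    by (rule agree_upto_mmul[OF _ agree_upto_one_unitriangular[OF V, folded V1_def]
          vanishes_below_mmul[OF uW N] vanishes_below_mmul[OF W1 T] uV V1]) simp_all
  moreover have "mmul (mmul W M) V = madd mident (mmul (mmul W N) V)"
    using uW by (simp add: MN mmul_madd_left mmul_madd_right mmul_mident_right WV)
  moreover have "agree_upto (Suc L) (madd mident (mmul (mmul W1 T) V1))
      (leading_form L A (\<lambda>r. B r + W r (Suc r) ** A (Suc r) + A r ** V (r + L) (Suc (r + L))))"
    using \<open>1 \<le> L\<close>
    unfolding W1_def V1_def T_def leading_form_def mident_eq_band mmul_madd_left mmul_madd_right
      mmul_band
    by (auto simp: agree_upto_def madd_def band_def ac_simps)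
  ultimately have "agree_upto (Suc L) (mmul (mmul W M) V)
      (leading_form L A (\<lambda>r. B r + W r (Suc r) ** A (Suc r) + A r ** V (r + L) (Suc (r + L))))"
    by (auto simp: agree_upto_def madd_def)
  then show ?thesis by (simp add: has_leading_def upper_triangular_mmul)
qed

section \<open>The matrices x0 and y0\<close>

lemma periodic_ut_x0: "periodic_ut x0"
  by (simp add: x0_def periodic_ut_exact_M0)

lemma periodic_ut_x2: "periodic_ut x2"
  by (simp add: x2_def periodic_ut_exact_M0)

lemma x0_has_leading: "has_leading 1 (\<lambda>_. enc 11) (\<lambda>_. enc 17) x0"
  unfolding has_leading_def
proof
  show "upper_triangular x0" by (simp add: vanishes_below_def x0_def exact_M0_def)
  show "agree_upto (Suc 1) x0 (leading_form 1 (\<lambda>_. enc 11) (\<lambda>_. enc 17))"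
    unfolding agree_upto_def
  proof (intro allI impI)
    fix r s :: nat
    assume "s \<le> r + Suc 1"
    then have "s < r \<or> s = r \<or> s = r + 1 \<or> s = r + 2" by auto
    then show "x0 r s = leading_form 1 (\<lambda>_. enc 11) (\<lambda>_. enc 17) r s"
      by (auto simp: x0_def exact_M0_def leading_form_def madd_def band_def mident_def encd_def
          Let_def)
  qed
qed

lemma upper_triangular_x0: "upper_triangular x0"
  using x0_has_leading by (simp add: has_leading_def)

lemma x0_pow_two_pow:
  "1 \<le> r \<Longrightarrow> has_leading (2 ^ r) (\<lambda>_. if odd r then enc 26 else enc 11) (\<lambda>_. 0) (mpow x0 (2 ^ r))"
proof (induction r rule: dec_induct)
  case base
  show ?case
    using has_leading_square[OF x0_has_leading enc_11_17_commute]
    by (simp add: mpow_two[OF upper_triangular_x0] enc_11_square)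
next
  case (step r)
  have "mpow x0 (2 ^ Suc r) = mmul (mpow x0 (2 ^ r)) (mpow x0 (2 ^ r))"
    by (simp add: mpow_add[symmetric] mult_2)
  then show ?case
    using has_leading_square[OF step.IH]
    by (cases "odd r") (simp_all add: enc_11_square enc_26_square)
qed

lemma x0_pow_3: "has_leading 1 (\<lambda>_. enc 11) (\<lambda>_. enc 11) (mpow x0 3)"
proof -
  have x0_3: "mpow x0 3 = mmul (mpow x0 2) x0" by (simp add: numeral_3_eq_3 numeral_2_eq_2)
  have x0_2: "has_leading 2 (\<lambda>_. enc 26) (\<lambda>_. 0) (mpow x0 2)"
    using x0_pow_two_pow[of 1] by simp
  have "agree_upto 2 (mmul (mpow x0 2) x0)
      (mmul (leading_form 2 (\<lambda>_. enc 26) (\<lambda>_. 0)) (leading_form 1 (\<lambda>_. enc 11) (\<lambda>_. enc 17)))"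
    using x0_2 x0_has_leading
    by (intro agree_upto_mmul[where a = 0 and b = 0 and p = 2 and q = 2])
      (auto simp: has_leading_def intro: agree_upto_mono,
       auto simp: vanishes_below_def leading_form_def madd_def band_def mident_def)
  also have "agree_upto 2 \<dots> (leading_form 1 (\<lambda>_. enc 11) (\<lambda>_. enc 11))"
    unfolding leading_form_def mident_eq_band mmul_madd_left mmul_madd_right mmul_band
    by (auto simp: agree_upto_def madd_def band_def enc_26_add_17 add.commute)
  finally show ?thesis
    unfolding has_leading_def x0_3 by (simp add: upper_triangular_mmul numeral_2_eq_2)
qed

lemma x0_pow_odd:
  assumes "odd n"
  shows "has_leading 1 (\<lambda>_. enc 11) (\<lambda>_. enc 17) (mpow x0 n)
    \<or> has_leading 1 (\<lambda>_. enc 11) (\<lambda>_. enc 11) (mpow x0 n)"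
proof -
  define k where "k = n div 4"
  have "agree_upto 2 (mpow x0 4) mident"
    using has_leading_agree_mident[OF x0_pow_two_pow[of 2, simplified], where K = 2] by simp
  then have period: "agree_upto 2 (mpow x0 (c + 4 * k)) (mpow x0 c)" for c
    by (rule agree_upto_mpow_add_mult)
  have "mpow x0 1 = x0" by (rule mpow_one[OF upper_triangular_x0])
  moreover have "n = 1 + 4 * k \<or> n = 3 + 4 * k" using assms unfolding k_def by presburger
  ultimately have "agree_upto 2 (mpow x0 n) x0 \<or> agree_upto 2 (mpow x0 n) (mpow x0 3)"
    using period[of 1] period[of 3] by auto
  then show ?thesis
    using has_leading_agree[OF x0_has_leading, of "mpow x0 n"]
      has_leading_agree[OF x0_pow_3, of "mpow x0 n"]
    by (auto simp: upper_triangular_mpow numeral_2_eq_2)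
qed

lemma exists_pow2_mult_odd: "1 \<le> (n::nat) \<Longrightarrow> \<exists>r m. n = 2 ^ r * m \<and> odd m"
proof (induction n rule: less_induct)
  case (less n)
  show ?case
  proof (cases "odd n")
    case True
    then show ?thesis by (rule_tac x = 0 in exI) auto
  next
    case False
    then obtain k where k: "n = 2 * k" by blast
    with less.prems obtain r m where "k = 2 ^ r * m" "odd m" using less.IH[of k] by auto
    with k show ?thesis by (rule_tac x = "Suc r" in exI) auto
  qed
qed

lemma x0_pow_cases:
  assumes "1 \<le> n"
  shows "has_leading 1 (\<lambda>_. enc 11) (\<lambda>_. enc 17) (mpow x0 n)
    \<or> has_leading 1 (\<lambda>_. enc 11) (\<lambda>_. enc 11) (mpow x0 n)
    \<or> (\<exists>r. 1 \<le> r \<and> odd r \<and> has_leading (2 ^ r) (\<lambda>_. enc 26) (\<lambda>_. 0) (mpow x0 n))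
    \<or> (\<exists>r. 2 \<le> r \<and> even r \<and> has_leading (2 ^ r) (\<lambda>_. enc 11) (\<lambda>_. 0) (mpow x0 n))"
proof -
  obtain r m where n: "n = 2 ^ r * m" and "odd m" using exists_pow2_mult_odd[OF assms] by blast
  then obtain k where m: "m = 1 + 2 * k" by (metis oddE add.commute)
  show ?thesis
  proof (cases "r = 0")
    case True
    then have "odd n" using n \<open>odd m\<close> by simp
    then show ?thesis using x0_pow_odd by blast
  next
    case False
    have x0_n: "mpow x0 n = mpow (mpow x0 (2 ^ r)) (1 + 2 * k)" by (simp only: n m mpow_mult)
    have X: "has_leading (2 ^ r) (\<lambda>_. if odd r then enc 26 else enc 11) (\<lambda>_. 0) (mpow x0 n)"
      unfolding x0_n using False
      by (intro has_leading_odd_power x0_pow_two_pow) (simp_all add: self_le_power)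
    show ?thesis
    proof (cases "odd r")
      case True
      moreover have "1 \<le> r" using False by simp
      ultimately show ?thesis using X by auto
    next
      case False
      moreover have "2 \<le> r" using \<open>r \<noteq> 0\<close> False by presburger
      ultimately show ?thesis using X by auto
    qed
  qed
qed

lemma x0_pow_form:
  assumes "1 \<le> L" "has_leading L (\<lambda>_. A) (\<lambda>_. B) (mpow x0 n)"
  shows "has_form (L - 1) [(A, A, A), (B, B, B)] (mpow x0 n)"
  using has_form_of_has_leading[OF periodic_ut_mpow[OF periodic_ut_x0] assms] by simp

lemma x0_pow_forms:
  assumes "1 \<le> n"
  shows "has_form 0 [encd 11 11 11, encd 17 17 17] (mpow x0 n)
          \<or> has_form 0 [encd 11 11 11, encd 11 11 11] (mpow x0 n)
          \<or> (\<exists>r. r \<ge> 1 \<and> odd r \<and> has_form (2 ^ r - 1) [encd 26 26 26, encd 0 0 0] (mpow x0 n))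
          \<or> (\<exists>r. r \<ge> 2 \<and> even r \<and> has_form (2 ^ r - 1) [encd 11 11 11, encd 0 0 0] (mpow x0 n))"
  using x0_pow_cases[OF assms]
proof (elim disjE exE conjE)
  assume "has_leading 1 (\<lambda>_. enc 11) (\<lambda>_. enc 17) (mpow x0 n)"
  from x0_pow_form[OF _ this] show ?thesis by (simp add: encd_def)
next
  assume "has_leading 1 (\<lambda>_. enc 11) (\<lambda>_. enc 11) (mpow x0 n)"
  from x0_pow_form[OF _ this] show ?thesis by (simp add: encd_def)
next
  fix r :: nat assume r: "1 \<le> r" "odd r" "has_leading (2 ^ r) (\<lambda>_. enc 26) (\<lambda>_. 0) (mpow x0 n)"
  from x0_pow_form[OF _ r(3)]
  have "has_form (2 ^ r - 1) [encd 26 26 26, encd 0 0 0] (mpow x0 n)" by (simp add: encd_def enc_0)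
  with r show ?thesis by blast
next
  fix r :: nat assume r: "2 \<le> r" "even r" "has_leading (2 ^ r) (\<lambda>_. enc 11) (\<lambda>_. 0) (mpow x0 n)"
  from x0_pow_form[OF _ r(3)]
  have "has_form (2 ^ r - 1) [encd 11 11 11, encd 0 0 0] (mpow x0 n)" by (simp add: encd_def enc_0)
  with r show ?thesis by blast
qed

text \<open>The second leading diagonal of \<open>x2 M x2\<^sup>-\<^sup>1\<close> when \<open>M\<close> has constant leading
  diagonals \<open>A\<close>, \<open>B\<close>, the first of them being the \<open>L\<close>-th, \<open>L mod 3 = c\<close>.\<close>
definition x2_conj_diag :: "nat \<Rightarrow> blk \<Rightarrow> blk \<Rightarrow> blk \<times> blk \<times> blk" where
  "x2_conj_diag c A B =
     (let D = (\<lambda>r. B + x2 r (Suc r) ** A + A ** x2 (r + c) (Suc (r + c))) in (D 0, D 1, D 2))"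

lemma x2_conj_diag_values:
  "x2_conj_diag 1 (enc 11) (enc 17) = encd 44 219 177"
  "x2_conj_diag 1 (enc 11) (enc 11) = encd 54 193 171"
  "x2_conj_diag 2 (enc 26) 0 = encd 0 157 106"
  "x2_conj_diag 1 (enc 11) 0 = encd 61 202 160"
  by (simp_all add: x2_conj_diag_def x2_def exact_M0_def encd_def enc_eval_simps)

lemma y0_pow: "mpow y0 n = mmul (mmul x2 (mpow x0 n)) (unitri_inv x2)"
proof -
  have "unitriangular x2" by (rule periodic_ut_imp_unitriangular[OF periodic_ut_x2])
  then show ?thesis
    by (simp add: y0_def minv_eq_unitri_inv periodic_ut_x2 mpow_conjugate mmul_unitri_inv
        mmul_unitri_inv_left unitriangular_def)
qed

lemma periodic_ut_y0: "periodic_ut y0"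
  by (simp add: y0_def minv_eq_unitri_inv periodic_ut_x0 periodic_ut_x2 periodic_ut_mmul
      periodic_ut_unitri_inv)

lemma y0_pow_form:
  assumes "1 \<le> L" "L mod 3 = c" "has_leading L (\<lambda>_. A) (\<lambda>_. B) (mpow x0 n)"
  shows "has_form (L - 1) [(A, A, A), x2_conj_diag c A B] (mpow y0 n)"
proof -
  have x2: "unitriangular x2" by (rule periodic_ut_imp_unitriangular[OF periodic_ut_x2])
  have "unitri_inv x2 (r + L) (Suc (r + L)) = x2 (r + c) (Suc (r + c))" for r
    using periodic_ut_mod[OF periodic_ut_x2, of r L "Suc r"] assms(2)
    by (simp add: unitri_inv_Suc bit_matrix_uminus)
  then have "has_leading L (\<lambda>_. A) (\<lambda>r. B + x2 r (Suc r) ** A + A ** x2 (r + c) (Suc (r + c)))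
      (mpow y0 n)"
    using has_leading_conjugate[OF x2 unitriangular_unitri_inv mmul_unitri_inv[OF x2] assms(1,3)]
    by (simp add: y0_pow)
  from has_form_of_has_leading[OF periodic_ut_mpow[OF periodic_ut_y0] assms(1) this]
  show ?thesis by (simp add: x2_conj_diag_def)
qed

lemma pow2_mod_3: "(2::nat) ^ r mod 3 = (if odd r then 2 else 1)"
proof (induction r)
  case (Suc r)
  have "(2::nat) ^ Suc r mod 3 = 2 * (2 ^ r mod 3) mod 3" by (simp add: mod_mult_right_eq)
  then show ?case using Suc by auto
qed simp

lemma y0_pow_forms:
  assumes "1 \<le> n"
  shows "has_form 0 [encd 11 11 11, encd 44 219 177] (mpow y0 n)
          \<or> has_form 0 [encd 11 11 11, encd 54 193 171] (mpow y0 n)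
          \<or> (\<exists>r. r \<ge> 1 \<and> odd r \<and> has_form (2 ^ r - 1) [encd 26 26 26, encd 0 157 106] (mpow y0 n))
          \<or> (\<exists>r. r \<ge> 2 \<and> even r \<and>
              has_form (2 ^ r - 1) [encd 11 11 11, encd 61 202 160] (mpow y0 n))"
  using x0_pow_cases[OF assms]
proof (elim disjE exE conjE)
  assume "has_leading 1 (\<lambda>_. enc 11) (\<lambda>_. enc 17) (mpow x0 n)"
  from y0_pow_form[where c = 1, OF _ _ this, unfolded x2_conj_diag_values]
  show ?thesis by (simp add: encd_def)
next
  assume "has_leading 1 (\<lambda>_. enc 11) (\<lambda>_. enc 11) (mpow x0 n)"
  from y0_pow_form[where c = 1, OF _ _ this, unfolded x2_conj_diag_values]
  show ?thesis by (simp add: encd_def)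
next
  fix r :: nat assume r: "1 \<le> r" "odd r" "has_leading (2 ^ r) (\<lambda>_. enc 26) (\<lambda>_. 0) (mpow x0 n)"
  from y0_pow_form[where c = 2, OF _ _ r(3), unfolded x2_conj_diag_values]
  have "has_form (2 ^ r - 1) [encd 26 26 26, encd 0 157 106] (mpow y0 n)"
    using r(2) by (simp add: pow2_mod_3 encd_def)
  with r show ?thesis by blast
next
  fix r :: nat assume r: "2 \<le> r" "even r" "has_leading (2 ^ r) (\<lambda>_. enc 11) (\<lambda>_. 0) (mpow x0 n)"
  from y0_pow_form[where c = 1, OF _ _ r(3), unfolded x2_conj_diag_values]
  have "has_form (2 ^ r - 1) [encd 11 11 11, encd 61 202 160] (mpow y0 n)"
    using r(2) by (simp add: pow2_mod_3 encd_def)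
  with r show ?thesis by blast
qed

theorem proposition4p5:
  shows "(\<forall>n\<ge>1.
            has_form 0 [encd 11 11 11, encd 17 17 17] (mpow x0 n)
          \<or> has_form 0 [encd 11 11 11, encd 11 11 11] (mpow x0 n)
          \<or> (\<exists>r. r \<ge> 1 \<and> odd r \<and> has_form (2 ^ r - 1) [encd 26 26 26, encd 0 0 0] (mpow x0 n))
          \<or> (\<exists>r. r \<ge> 2 \<and> even r \<and> has_form (2 ^ r - 1) [encd 11 11 11, encd 0 0 0] (mpow x0 n)))
       \<and> (\<forall>n\<ge>1.
            has_form 0 [encd 11 11 11, encd 44 219 177] (mpow y0 n)
          \<or> has_form 0 [encd 11 11 11, encd 54 193 171] (mpow y0 n)
          \<or> (\<exists>r. r \<ge> 1 \<and> odd r \<and> has_form (2 ^ r - 1) [encd 26 26 26, encd 0 157 106] (mpow y0 n))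
          \<or> (\<exists>r. r \<ge> 2 \<and> even r \<and> has_form (2 ^ r - 1) [encd 11 11 11, encd 61 202 160] (mpow y0 n)))"
  using x0_pow_forms y0_pow_forms by blast

end
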